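(* Let $n\ge 3$ and let $S_n$ be a complete sun graph on $2n$ vertices. Then the sparing number of $S_n$ is $\varphi(S_n)=\frac{1}{2}(n^2-3n+6)$.
   Context: An $n$-sun ($n\ge3$) is a graph on $2n$ vertices whose vertex set is partitioned into $U=\{u_1,\dots,u_n\}$ and $W=\{w_1,\dots,w_n\}$, where $W$ is an independent set and $w_j$ is adjacent to $u_i$ if and only if $j=i$ or $j\equiv i+1 \pmod n$. A complete sun is an $n$-sun in which the induced subgraph on $U$ is complete. Let $\mathbb{N}_0$ be the set of non-negative integers; for $A,B\subseteq\mathbb{N}_0$, $A+B=\{a+b:a\in A,b\in B\}$. An integer additive set-indexer (IASI) of a graph $G$ is an injective map $f:V(G)\to\mathcal{P}(\mathbb{N}_0)$ such that $f^+:E(G)\to\mathcal{P}(\mathbb{N}_0)$, $f^+(uv)=f(u)+f(v)$, is injective. A weak IASI is an IASI with $|f^+(uv)|=\max(|f(u)|,|f(v)|)$ for every edge $uv$. An edge $e$ is mono-indexed if $|f^+(e)|=1$. The sparing number $\varphi(G)$ is the minimum number of mono-indexed edges over all weak IASIs of $G$. *)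

theory Defs
  imports Complex_Main
begin

text \<open>A (simple, undirected) graph is given by a vertex set V and an edge set E,
  each edge being a two-element set of vertices.\<close>

definition sumset :: "nat set \<Rightarrow> nat set \<Rightarrow> nat set" where
  "sumset A B = {a + b | a b. a \<in> A \<and> b \<in> B}"

definition edge_label :: "('a \<Rightarrow> nat set) \<Rightarrow> 'a set \<Rightarrow> nat set" where
  "edge_label f e = (THE S. \<exists>u v. e = {u, v} \<and> u \<noteq> v \<and> S = sumset (f u) (f v))"

definition IASI :: "'a set \<Rightarrow> 'a set set \<Rightarrow> ('a \<Rightarrow> nat set) \<Rightarrow> bool" where
  "IASI V E f \<longleftrightarrow> (\<forall>v\<in>V. finite (f v) \<and> f v \<noteq> {}) \<and> inj_on f V \<and> inj_on (edge_label f) E"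

definition weak_IASI :: "'a set \<Rightarrow> 'a set set \<Rightarrow> ('a \<Rightarrow> nat set) \<Rightarrow> bool" where
  "weak_IASI V E f \<longleftrightarrow> IASI V E f \<and>
     (\<forall>u v. {u, v} \<in> E \<longrightarrow> u \<noteq> v \<longrightarrow> card (edge_label f {u, v}) = max (card (f u)) (card (f v)))"

definition mono_indexed_edges :: "'a set set \<Rightarrow> ('a \<Rightarrow> nat set) \<Rightarrow> 'a set set" where
  "mono_indexed_edges E f = {e \<in> E. card (edge_label f e) = 1}"

definition sparing_number :: "'a set \<Rightarrow> 'a set set \<Rightarrow> nat" where
  "sparing_number V E = (LEAST k. \<exists>f. weak_IASI V E f \<and> card (mono_indexed_edges E f) = k)"

text \<open>The complete sun on 2n vertices: u_i = Inl i, w_j = Inr j (0 \<le> i,j < n);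
  U is a clique, W is independent, w_j ~ u_i iff j = i or j = (i+1) mod n.\<close>
definition complete_sun_V :: "nat \<Rightarrow> (nat + nat) set" where
  "complete_sun_V n = Inl ` {..<n} \<union> Inr ` {..<n}"

definition complete_sun_E :: "nat \<Rightarrow> (nat + nat) set set" where
  "complete_sun_E n =
     {{Inl i, Inl j} | i j. i < n \<and> j < n \<and> i \<noteq> j} \<union>
     {{Inl i, Inr j} | i j. i < n \<and> j < n \<and> (j = i \<or> j = Suc i mod n)}"

end

theory Submission
  imports Defs
begin

text \<open>In a weak IASI every label is finite and nonempty, and a sumset A + B has a single
  element exactly when A and B do; an edge is mono-indexed iff both of its ends carry
  singletons. Moreover two ends with labels of size at least 2 would give an edge label
  larger than both, so the vertices with non-singleton labels form an independent set, and
  the mono-indexed edges are exactly the edges of the graph with that set removed.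
  In the complete sun at most one u_i can be removed; if none is, all n(n-1)/2 clique
  edges survive, and if u_i is removed, w_i and w_(i+1) must stay, so besides the
  (n-1)(n-2)/2 remaining clique edges the spokes u_(i-1) w_i and u_(i+1) w_(i+1) survive.
  The bound (n-1)(n-2)/2 + 2 is attained by doubling the labels of u_0 and of w_2, ...,
  w_(n-1).\<close>

lemma sumset_commute: "sumset A B = sumset B A"
  unfolding sumset_def by (metis add.commute)

lemma sumset_singleton: "sumset {a} B = (+) a ` B"
  by (auto simp: sumset_def)

lemma card_sumset_singleton: "card (sumset {a} B) = card B"
  by (simp add: sumset_singleton card_image)

lemma sumset_eq_image: "sumset A B = case_prod (+) ` (A \<times> B)"
  by (auto simp: sumset_def)

lemma finite_sumset: "finite A \<Longrightarrow> finite B \<Longrightarrow> finite (sumset A B)"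
  by (simp add: sumset_eq_image)

lemma card_le_card_sumset:
  assumes "finite A" "finite B" "b \<in> B"
  shows "card A \<le> card (sumset A B)"
proof -
  have "(\<lambda>a. a + b) ` A \<subseteq> sumset A B" using assms(3) by (auto simp: sumset_def)
  then have "card ((\<lambda>a. a + b) ` A) \<le> card (sumset A B)"
    by (intro card_mono finite_sumset assms(1,2))
  then show ?thesis by (simp add: card_image)
qed

text \<open>A translate of A by min B and the element max A + max B are disjoint parts of A + B.\<close>
lemma card_less_card_sumset:
  assumes "finite A" "finite B" "A \<noteq> {}" "2 \<le> card B"
  shows "card A < card (sumset A B)"
proof -
  have "B \<noteq> {}" using assms(4) by auto
  have "Min B < Max B"
  proof (rule ccontr)
    assume "\<not> Min B < Max B"
    then have "B \<subseteq> {Min B}"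
      using assms(2) by (auto simp: not_less) (meson Max_ge Min_le antisym order.trans)
    then have "card B \<le> 1" using card_mono[of "{Min B}" B] by simp
    then show False using assms(4) by simp
  qed
  have new: "Max A + Max B \<notin> (\<lambda>a. a + Min B) ` A"
  proof
    assume "Max A + Max B \<in> (\<lambda>a. a + Min B) ` A"
    then obtain a where "a \<in> A" "Max A + Max B = a + Min B" by blast
    moreover have "a \<le> Max A" using \<open>a \<in> A\<close> assms(1) by simp
    ultimately show False using \<open>Min B < Max B\<close> by linarith
  qed
  moreover have "insert (Max A + Max B) ((\<lambda>a. a + Min B) ` A) \<subseteq> sumset A B"
    using assms \<open>B \<noteq> {}\<close> Max_in Min_in unfolding sumset_def by blast
  ultimately have "card (insert (Max A + Max B) ((\<lambda>a. a + Min B) ` A)) \<le> card (sumset A B)"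
    using assms(1,2) by (intro card_mono finite_sumset)
  moreover have "card (insert (Max A + Max B) ((\<lambda>a. a + Min B) ` A)) = Suc (card A)"
    using new assms(1) by (simp add: card_image)
  ultimately show ?thesis by simp
qed

lemma card_sumset_eq_1_iff:
  assumes "finite A" "finite B" "A \<noteq> {}" "B \<noteq> {}"
  shows "card (sumset A B) = 1 \<longleftrightarrow> card A = 1 \<and> card B = 1"
proof
  assume "card (sumset A B) = 1"
  moreover have "card A \<le> card (sumset A B)" "card B \<le> card (sumset A B)"
    using assms card_le_card_sumset[of A B] card_le_card_sumset[of B A] sumset_commute[of A B]
    by auto
  ultimately show "card A = 1 \<and> card B = 1"
    using assms by (simp add: card_gt_0_iff le_antisym Suc_leI)
next
  assume "card A = 1 \<and> card B = 1"
  then show "card (sumset A B) = 1"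
    by (auto simp: card_1_singleton_iff sumset_singleton)
qed

lemma Min_sumset:
  assumes "finite A" "finite B" "A \<noteq> {}" "B \<noteq> {}"
  shows "Min (sumset A B) = Min A + Min B"
proof (rule Min_eqI)
  show "finite (sumset A B)" using assms by (simp add: finite_sumset)
  show "Min A + Min B \<le> s" if "s \<in> sumset A B" for s
    using that assms by (auto simp: sumset_def intro: add_mono)
  show "Min A + Min B \<in> sumset A B" using assms Min_in unfolding sumset_def by blast
qed

lemma edge_label_doubleton: "u \<noteq> v \<Longrightarrow> edge_label f {u, v} = sumset (f u) (f v)"
  unfolding edge_label_def
  by (rule the_equality) (auto simp: doubleton_eq_iff sumset_commute)

definition graph :: "'a set \<Rightarrow> 'a set set \<Rightarrow> bool" where
  "graph V E \<longleftrightarrow> (\<forall>e\<in>E. \<exists>u\<in>V. \<exists>v\<in>V. u \<noteq> v \<and> e = {u, v})"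

definition edges_within :: "'a set set \<Rightarrow> 'a set \<Rightarrow> 'a set set" where
  "edges_within E S = {e \<in> E. e \<subseteq> S}"

definition singleton_labelled :: "'a set \<Rightarrow> ('a \<Rightarrow> nat set) \<Rightarrow> 'a set" where
  "singleton_labelled V f = {v \<in> V. card (f v) = 1}"

lemma mono_indexed_edges_eq_edges_within:
  assumes "graph V E" "\<forall>v\<in>V. finite (f v) \<and> f v \<noteq> {}"
  shows "mono_indexed_edges E f = edges_within E (singleton_labelled V f)"
proof -
  have "card (edge_label f e) = 1 \<longleftrightarrow> e \<subseteq> singleton_labelled V f" if "e \<in> E" for e
  proof -
    obtain u v where "u \<in> V" "v \<in> V" "u \<noteq> v" "e = {u, v}"
      using assms(1) \<open>e \<in> E\<close> unfolding graph_def by blast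
    then show ?thesis
      using assms(2) card_sumset_eq_1_iff[of "f u" "f v"]
      by (simp add: edge_label_doubleton singleton_labelled_def)
  qed
  then show ?thesis unfolding mono_indexed_edges_def edges_within_def by blast
qed

lemma weak_IASI_edge_meets_singleton_labelled:
  assumes "weak_IASI V E f" "graph V E" "e \<in> E"
  shows "e \<inter> singleton_labelled V f \<noteq> {}"
proof
  assume disjoint: "e \<inter> singleton_labelled V f = {}"
  obtain u v where uv: "u \<in> V" "v \<in> V" "u \<noteq> v" "e = {u, v}"
    using assms(2,3) unfolding graph_def by blast
  have fin: "finite (f u)" "f u \<noteq> {}" "finite (f v)" "f v \<noteq> {}"
    using assms(1) uv(1,2) unfolding weak_IASI_def IASI_def by auto
  moreover have "card (f u) \<noteq> 1" "card (f v) \<noteq> 1"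
    using disjoint uv by (auto simp: singleton_labelled_def)
  ultimately have "2 \<le> card (f u)" "2 \<le> card (f v)"
    by (simp_all add: Suc_leI card_gt_0_iff nat_neq_iff)
  then have "card (f u) < card (sumset (f u) (f v))" "card (f v) < card (sumset (f v) (f u))"
    using fin by (auto intro: card_less_card_sumset)
  moreover have "card (sumset (f u) (f v)) = max (card (f u)) (card (f v))"
    using assms(1,3) uv unfolding weak_IASI_def by (metis edge_label_doubleton)
  ultimately show False by (simp add: sumset_commute max_def split: if_splits)
qed

lemma complete_sun_E_cases:
  assumes "e \<in> complete_sun_E n"
  obtains (clique) i j where "i < n" "j < n" "i \<noteq> j" "e = {Inl i, Inl j}"
  | (spoke) i j where "i < n" "j < n" "j = i \<or> j = Suc i mod n" "e = {Inl i, Inr j}"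
  using assms unfolding complete_sun_E_def by blast

lemma clique_edge_in_complete_sun_E:
  "i < n \<Longrightarrow> j < n \<Longrightarrow> i \<noteq> j \<Longrightarrow> {Inl i, Inl j} \<in> complete_sun_E n"
  unfolding complete_sun_E_def by blast

lemma spoke_edge_in_complete_sun_E:
  "i < n \<Longrightarrow> j = i \<or> j = Suc i mod n \<Longrightarrow> {Inl i, Inr j} \<in> complete_sun_E n"
  unfolding complete_sun_E_def by fastforce

lemma graph_complete_sun: "graph (complete_sun_V n) (complete_sun_E n)"
  unfolding graph_def
proof
  fix e assume "e \<in> complete_sun_E n"
  then show "\<exists>u\<in>complete_sun_V n. \<exists>v\<in>complete_sun_V n. u \<noteq> v \<and> e = {u, v}"
  proof (cases rule: complete_sun_E_cases)
    case (clique i j)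
    then show ?thesis
      by (intro bexI[of _ "Inl i"] bexI[of _ "Inl j"]) (simp_all add: complete_sun_V_def)
  next
    case (spoke i j)
    then show ?thesis
      by (intro bexI[of _ "Inl i"] bexI[of _ "Inr j"]) (simp_all add: complete_sun_V_def)
  qed
qed

lemma finite_complete_sun_E: "finite (complete_sun_E n)"
proof (rule finite_subset)
  show "complete_sun_E n \<subseteq> Pow (complete_sun_V n)"
    using graph_complete_sun unfolding graph_def by fast
  show "finite (Pow (complete_sun_V n))" by (simp add: complete_sun_V_def)
qed

definition clique_edges :: "nat set \<Rightarrow> (nat + nat) set set" where
  "clique_edges A = {e. e \<subseteq> Inl ` A \<and> card e = 2}"

lemma card_clique_edges: "finite A \<Longrightarrow> card (clique_edges A) = card A choose 2"
  unfolding clique_edges_def using n_subsets[of "Inl ` A" 2] by (simp add: card_image)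

lemma clique_edges_subset_edges_within:
  assumes "A \<subseteq> {..<n}" "Inl ` A \<subseteq> S"
  shows "clique_edges A \<subseteq> edges_within (complete_sun_E n) S"
proof
  fix e assume "e \<in> clique_edges A"
  then obtain x y where "e = {x, y}" "x \<noteq> y" "e \<subseteq> Inl ` A"
    unfolding clique_edges_def card_2_iff by blast
  then obtain i j where "e = {Inl i, Inl j}" "i \<noteq> j" "i \<in> A" "j \<in> A" by auto
  moreover from this have "e \<in> complete_sun_E n"
    using assms(1) clique_edge_in_complete_sun_E by blast
  ultimately show "e \<in> edges_within (complete_sun_E n) S"
    using assms(2) by (auto simp: edges_within_def)
qed

text \<open>If u_i is not in S, all other u_j are, and so are its two neighbours w_i and w_(i+1);
  this yields the two spokes u_(i-1) w_i and u_(i+1) w_(i+1) inside S.\<close>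
lemma complete_sun_spokes_within:
  assumes "3 \<le> n" and cover: "\<And>e. e \<in> complete_sun_E n \<Longrightarrow> e \<inter> S \<noteq> {}"
    and "i < n" "Inl i \<notin> S"
  defines "i' \<equiv> (i + n - 1) mod n" and "j \<equiv> Suc i mod n"
  shows "{{Inl i', Inr i}, {Inl j, Inr j}} \<subseteq> edges_within (complete_sun_E n) S"
proof -
  have i': "i' < n" "Suc i' mod n = i" using assms(1,3) by (simp_all add: i'_def mod_Suc_eq)
  have j: "j < n" "j \<noteq> i" using assms(1,3) by (simp_all add: j_def mod_Suc)
  have "i' \<noteq> i" using i'(2) j(2) j_def by auto
  have in_S: "x \<in> S" if "{Inl i, x} \<in> complete_sun_E n" for x
    using cover[OF that] assms(4) by blast
  have "Inl i' \<in> S" "Inl j \<in> S"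
    using in_S clique_edge_in_complete_sun_E assms(3) i'(1) j \<open>i' \<noteq> i\<close> by metis+
  moreover have "Inr i \<in> S" "Inr j \<in> S"
    using in_S spoke_edge_in_complete_sun_E assms(3) j_def by metis+
  moreover have "{Inl i', Inr i} \<in> complete_sun_E n" "{Inl j, Inr j} \<in> complete_sun_E n"
    using spoke_edge_in_complete_sun_E i' j(1) by metis+
  ultimately show ?thesis by (simp add: edges_within_def)
qed

lemma complete_sun_edges_within_lower_bound:
  assumes "3 \<le> n" and cover: "\<And>e. e \<in> complete_sun_E n \<Longrightarrow> e \<inter> S \<noteq> {}"
  shows "(n - 1 choose 2) + 2 \<le> card (edges_within (complete_sun_E n) S)"
proof -
  let ?W = "edges_within (complete_sun_E n) S"
  have "finite ?W" using finite_complete_sun_E by (simp add: edges_within_def)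
  show ?thesis
  proof (cases "Inl ` {..<n} \<subseteq> S")
    case True
    then have "card (clique_edges {..<n}) \<le> card ?W"
      by (intro card_mono \<open>finite ?W\<close> clique_edges_subset_edges_within) auto
    moreover have "n choose 2 = (n - 1) + (n - 1 choose 2)"
      using assms(1) by (cases n) (simp_all add: numeral_2_eq_2)
    ultimately show ?thesis using assms(1) by (simp add: card_clique_edges)
  next
    case False
    then obtain i where i: "i < n" "Inl i \<notin> S" by auto
    define i' where "i' = (i + n - 1) mod n"
    define j where "j = Suc i mod n"
    let ?A = "{..<n} - {i}"
    let ?spokes = "{{Inl i', Inr i}, {Inl j, Inr j}}"
    have "Inl k \<in> S" if "k \<in> ?A" for k
      using cover[OF clique_edge_in_complete_sun_E[of i n k]] i that by auto
    then have "clique_edges ?A \<union> ?spokes \<subseteq> ?W"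
      using clique_edges_subset_edges_within[of ?A n S]
        complete_sun_spokes_within[OF assms i] i'_def j_def by blast
    then have "card (clique_edges ?A \<union> ?spokes) \<le> card ?W"
      by (intro card_mono \<open>finite ?W\<close>)
    moreover have "card (clique_edges ?A \<union> ?spokes) = card (clique_edges ?A) + 2"
    proof -
      have "j \<noteq> i" using assms(1) i(1) by (simp add: j_def mod_Suc)
      then show ?thesis
        by (subst card_Un_disjoint) (auto simp: clique_edges_def doubleton_eq_iff)
    qed
    ultimately show ?thesis using i(1) by (simp add: card_clique_edges)
  qed
qed

lemma weak_IASI_complete_sun_mono_indexed_edges_ge:
  assumes "3 \<le> n" "weak_IASI (complete_sun_V n) (complete_sun_E n) f"
  shows "(n - 1 choose 2) + 2 \<le> card (mono_indexed_edges (complete_sun_E n) f)"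
proof -
  have "\<forall>v\<in>complete_sun_V n. finite (f v) \<and> f v \<noteq> {}"
    using assms(2) unfolding weak_IASI_def IASI_def by blast
  then have "mono_indexed_edges (complete_sun_E n) f
      = edges_within (complete_sun_E n) (singleton_labelled (complete_sun_V n) f)"
    by (intro mono_indexed_edges_eq_edges_within graph_complete_sun)
  then show ?thesis
    using complete_sun_edges_within_lower_bound[OF assms(1)]
      weak_IASI_edge_meets_singleton_labelled[OF assms(2) graph_complete_sun]
    by simp
qed

lemma power_two_sum_eq_ordered:
  assumes "a < b" "c < d" "(2::nat) ^ a + 2 ^ b = 2 ^ c + 2 ^ d"
  shows "a = c \<and> b = d"
proof -
  have below: "(2::nat) ^ x + 2 ^ y < 2 ^ z" if "x < y" "y < z" for x y z
  proof -
    have "(2::nat) ^ x + 2 ^ y < 2 ^ Suc y" using that by simp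
    also have "\<dots> \<le> 2 ^ z" using that by (intro power_increasing) auto
    finally show ?thesis .
  qed
  have "\<not> b < d" "\<not> d < b"
    using below[OF assms(1)] below[OF assms(2)] assms(3)
    by (metis add_lessD1 add.commute less_irrefl)+
  then show ?thesis using assms(3) by simp
qed

lemma power_two_sum_eq:
  assumes "a \<noteq> b" "c \<noteq> d" "(2::nat) ^ a + 2 ^ b = 2 ^ c + 2 ^ d"
  shows "{a, b} = {c, d}"
  using assms power_two_sum_eq_ordered[of a b c d] power_two_sum_eq_ordered[of b a c d]
    power_two_sum_eq_ordered[of a b d c] power_two_sum_eq_ordered[of b a d c]
  by (cases "a < b"; cases "c < d") (auto simp: add.commute)

fun vertex_code :: "nat + nat \<Rightarrow> nat" where
  "vertex_code (Inl i) = 2 * i"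
| "vertex_code (Inr j) = Suc (2 * j)"

lemma inj_vertex_code: "inj vertex_code"
proof (rule injI)
  fix x y assume "vertex_code x = vertex_code y"
  then show "x = y" by (cases x; cases y; simp; presburger)
qed

fun doubled :: "nat + nat \<Rightarrow> bool" where
  "doubled (Inl i) \<longleftrightarrow> i = 0"
| "doubled (Inr j) \<longleftrightarrow> 2 \<le> j"

text \<open>Only u_0 and w_2, ..., w_(n-1) get two-element labels, and they form an independent
  set. The minima of the labels are distinct powers of two, so the minimum of an edge label
  determines the edge.\<close>
definition sun_label :: "nat + nat \<Rightarrow> nat set" where
  "sun_label v =
    (if doubled v then {2 ^ vertex_code v, Suc (2 ^ vertex_code v)} else {2 ^ vertex_code v})"

lemma sun_label_finite_nonempty: "finite (sun_label v)" "sun_label v \<noteq> {}"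
  unfolding sun_label_def by auto

lemma Min_sun_label: "Min (sun_label v) = 2 ^ vertex_code v"
  unfolding sun_label_def by (auto intro: Min_eqI)

lemma card_sun_label: "card (sun_label v) = (if doubled v then 2 else 1)"
  unfolding sun_label_def by auto

lemma inj_sun_label: "inj sun_label"
proof (rule injI)
  fix x y assume "sun_label x = sun_label y"
  then have "(2::nat) ^ vertex_code x = 2 ^ vertex_code y" by (metis Min_sun_label)
  then show "x = y" using inj_vertex_code by (simp add: inj_eq)
qed

lemma complete_sun_doubled_independent:
  assumes "3 \<le> n" "{u, v} \<in> complete_sun_E n"
  shows "\<not> (doubled u \<and> doubled v)"
  using assms(2)
proof (cases rule: complete_sun_E_cases)
  case (clique i j)
  then show ?thesis by (auto simp: doubleton_eq_iff)
next
  case (spoke i j)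
  have "Suc 0 mod n = 1" using assms(1) by simp
  then show ?thesis using spoke by (auto simp: doubleton_eq_iff)
qed

lemma Min_edge_label_sun_label:
  "x \<noteq> y \<Longrightarrow> Min (edge_label sun_label {x, y}) = 2 ^ vertex_code x + 2 ^ vertex_code y"
  by (simp add: edge_label_doubleton Min_sumset sun_label_finite_nonempty Min_sun_label)

lemma inj_on_edge_label_sun_label: "inj_on (edge_label sun_label) (complete_sun_E n)"
proof (rule inj_onI)
  fix e e' assume "e \<in> complete_sun_E n" "e' \<in> complete_sun_E n"
    and eq: "edge_label sun_label e = edge_label sun_label e'"
  then obtain x y x' y' where xy: "x \<noteq> y" "e = {x, y}" and xy': "x' \<noteq> y'" "e' = {x', y'}"
    using graph_complete_sun unfolding graph_def by metis
  then have "(2::nat) ^ vertex_code x + 2 ^ vertex_code y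
      = 2 ^ vertex_code x' + 2 ^ vertex_code y'"
    using eq Min_edge_label_sun_label by metis
  then have "vertex_code ` {x, y} = vertex_code ` {x', y'}"
    using power_two_sum_eq xy(1) xy'(1) inj_vertex_code by (simp add: inj_eq)
  then show "e = e'"
    using xy(2) xy'(2) by (simp only: inj_image_eq_iff[OF inj_vertex_code])
qed

lemma sun_label_weak_IASI:
  assumes "3 \<le> n"
  shows "weak_IASI (complete_sun_V n) (complete_sun_E n) sun_label"
proof -
  have "card (edge_label sun_label {u, v}) = max (card (sun_label u)) (card (sun_label v))"
    if "{u, v} \<in> complete_sun_E n" "u \<noteq> v" for u v
  proof -
    have "\<not> doubled u \<or> \<not> doubled v"
      using complete_sun_doubled_independent[OF assms that(1)] by blast
    then show ?thesis
    proof
      assume "\<not> doubled u"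
      then show ?thesis
        by (simp add: edge_label_doubleton[OF that(2)] sun_label_def[of u] card_sumset_singleton
            card_sun_label)
    next
      assume "\<not> doubled v"
      then show ?thesis
        by (simp add: edge_label_doubleton[OF that(2)] sun_label_def[of v] card_sumset_singleton
            sumset_commute[of "sun_label u"] card_sun_label)
    qed
  qed
  then show ?thesis
    unfolding weak_IASI_def IASI_def
    using sun_label_finite_nonempty inj_on_subset[OF inj_sun_label] inj_on_edge_label_sun_label
    by blast
qed

lemma singleton_labelled_sun_label:
  "singleton_labelled V sun_label = {v \<in> V. \<not> doubled v}"
  by (auto simp: singleton_labelled_def card_sun_label)

lemma complete_sun_undoubled_edges:
  assumes "3 \<le> n"
  shows "edges_within (complete_sun_E n) {v \<in> complete_sun_V n. \<not> doubled v}
    \<subseteq> clique_edges {1..<n} \<union> {{Inl (n - 1), Inr 0}, {Inl 1, Inr 1}}"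
proof
  fix e assume "e \<in> edges_within (complete_sun_E n) {v \<in> complete_sun_V n. \<not> doubled v}"
  then have "e \<in> complete_sun_E n" and undoubled: "\<And>v. v \<in> e \<Longrightarrow> \<not> doubled v"
    by (auto simp: edges_within_def)
  from \<open>e \<in> complete_sun_E n\<close>
  show "e \<in> clique_edges {1..<n} \<union> {{Inl (n - 1), Inr 0}, {Inl 1, Inr 1}}"
  proof (cases rule: complete_sun_E_cases)
    case (clique i j)
    moreover have "i \<noteq> 0" "j \<noteq> 0"
      using undoubled[of "Inl i"] undoubled[of "Inl j"] clique(4) by auto
    ultimately show ?thesis by (simp add: clique_edges_def)
  next
    case (spoke i j)
    then have "i \<noteq> 0" "j < 2"
      using undoubled[of "Inl i"] undoubled[of "Inr j"] by auto
    moreover have "Suc i mod n = (if Suc i = n then 0 else Suc i)"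
      using spoke(1) by (simp add: mod_Suc)
    ultimately have "i = n - 1 \<and> j = 0 \<or> i = 1 \<and> j = 1"
      using spoke(3) assms by (auto split: if_splits)
    then show ?thesis using spoke(4) by auto
  qed
qed

lemma sun_label_mono_indexed_edges_le:
  assumes "3 \<le> n"
  shows "card (mono_indexed_edges (complete_sun_E n) sun_label) \<le> (n - 1 choose 2) + 2"
proof -
  let ?spokes = "{{Inl (n - 1), Inr 0}, {Inl 1, Inr 1}} :: (nat + nat) set set"
  have "mono_indexed_edges (complete_sun_E n) sun_label
      = edges_within (complete_sun_E n) {v \<in> complete_sun_V n. \<not> doubled v}"
    using mono_indexed_edges_eq_edges_within[OF graph_complete_sun] sun_label_finite_nonempty
    by (simp add: singleton_labelled_sun_label)
  also have "\<dots> \<subseteq> clique_edges {1..<n} \<union> ?spokes"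
    by (rule complete_sun_undoubled_edges[OF assms])
  finally have "card (mono_indexed_edges (complete_sun_E n) sun_label)
      \<le> card (clique_edges {1..<n} \<union> ?spokes)"
    by (intro card_mono) (simp_all add: clique_edges_def)
  also have "\<dots> \<le> card (clique_edges {1..<n}) + card ?spokes" by (rule card_Un_le)
  also have "\<dots> \<le> (n - 1 choose 2) + 2" by (simp add: card_clique_edges card_insert_if)
  finally show ?thesis .
qed

lemma real_choose_two: "real (m choose 2) = real m * (real m - 1) / 2"
proof (cases m)
  case (Suc k)
  have "even (Suc k * k)" by simp
  then show ?thesis using Suc by (simp add: choose_two real_of_nat_div algebra_simps)
qed simp

theorem theorem2p3:
  fixes n :: nat
  assumes "n \<ge> 3"
  shows "real (sparing_number (complete_sun_V n) (complete_sun_E n))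
           = (real n ^ 2 - 3 * real n + 6) / 2"
proof -
  have "sparing_number (complete_sun_V n) (complete_sun_E n) = (n - 1 choose 2) + 2"
    unfolding sparing_number_def
  proof (rule Least_equality)
    show "\<exists>f. weak_IASI (complete_sun_V n) (complete_sun_E n) f
        \<and> card (mono_indexed_edges (complete_sun_E n) f) = (n - 1 choose 2) + 2"
      using sun_label_weak_IASI[OF assms] sun_label_mono_indexed_edges_le[OF assms]
        weak_IASI_complete_sun_mono_indexed_edges_ge[OF assms] by (meson le_antisym)
    show "(n - 1 choose 2) + 2 \<le> k"
      if "\<exists>f. weak_IASI (complete_sun_V n) (complete_sun_E n) f
        \<and> card (mono_indexed_edges (complete_sun_E n) f) = k" for k
      using that weak_IASI_complete_sun_mono_indexed_edges_ge[OF assms] by blast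
  qed
  then show ?thesis
    using assms by (simp add: real_choose_two of_nat_diff power2_eq_square field_simps)
qed

end
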